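(* Let $(X,\mathsf d)$ be an extended metric space, $K\in\mathbb R$, $E:X\to\mathbb R\cup\{+\infty\}$ lower semicontinuous, $\mu$ a probability measure on $X$ with finite variance, and $\epsilon\ge0$. Assume there is an $\mathrm{EVI}_K$ gradient flow $(y_t)_{t>0}$ of $E$ starting from a point $y\in X$ with $\int_X\mathsf d^2(y,z)\,d\mu(z)\le\mathrm{Var}(\mu)+\epsilon$. Then for all $t>0$, $$E(y_t)\le\int_XE(z)\,d\mu(z)-\frac K2\mathrm{Var}(\mu)+\frac{\epsilon}{2I_K(t)},\qquad I_K(t)=\int_0^te^{Kr}\,dr.$$ In particular, if $\mu$ has a barycenter $\bar y$ and there is an $\mathrm{EVI}_K$ gradient flow of $E$ starting from $\bar y$, then $$E(\bar y)\le\int_XE(z)\,d\mu(z)-\frac K2\int_X\mathsf d^2(\bar y,z)\,d\mu(z).$$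
   Context: Extended metric space: $\mathsf d:X\times X\to[0,\infty]$ symmetric, triangle inequality, $\mathsf d(x,y)=0$ iff $x=y$. $\mathrm{Var}(\mu)=\inf_{x\in X}\int\mathsf d^2(x,z)\,d\mu(z)$; a barycenter is a minimizer. $\mathrm{EVI}_K$ gradient flow of $E$ starting from $y_0$: a locally absolutely continuous curve $(0,\infty)\ni t\mapsto y_t$ with $y_t\to y_0$ in $\mathsf d$ as $t\to0$ such that for every $z\in\mathrm D(E)=\{E<\infty\}$ with $\mathsf d(z,y_t)<\infty$ for some (hence all) $t>0$: $\frac12\frac d{dt}\mathsf d^2(y_t,z)+\frac K2\mathsf d^2(y_t,z)\le E(z)-E(y_t)$ for a.e. $t>0$; if $y_0\notin\mathrm D(E)$ one requires additionally $\liminf_{t\downarrow0}E(y_t)\ge E(y_0)$ and $\mathsf d(y_t,w)\to\mathsf d(y_0,w)$ for all $w\in\overline{\mathrm D(E)}$. *)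

theory Defs
  imports "HOL-Analysis.Analysis" "HOL-Probability.Probability"
begin

definition ext_metric :: "('a \<Rightarrow> 'a \<Rightarrow> ennreal) \<Rightarrow> bool" where
  "ext_metric d \<longleftrightarrow>
     (\<forall>x y. d x y = d y x) \<and>
     (\<forall>x y z. d x z \<le> d x y + d y z) \<and>
     (\<forall>x y. d x y = 0 \<longleftrightarrow> x = y)"

definition ed_open :: "('a \<Rightarrow> 'a \<Rightarrow> ennreal) \<Rightarrow> 'a set set" where
  "ed_open d = {U. \<forall>x\<in>U. \<exists>r::real>0. \<forall>z. d x z < ennreal r \<longrightarrow> z \<in> U}"

definition ed_borel :: "('a \<Rightarrow> 'a \<Rightarrow> ennreal) \<Rightarrow> 'a set set" where
  "ed_borel d = sigma_sets UNIV (ed_open d)"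

text \<open>Lower semicontinuity (sequential, which is equivalent in metric topologies).\<close>
definition ed_lsc :: "('a \<Rightarrow> 'a \<Rightarrow> ennreal) \<Rightarrow> ('a \<Rightarrow> ereal) \<Rightarrow> bool" where
  "ed_lsc d E \<longleftrightarrow>
     (\<forall>x xs. ((\<lambda>n. d (xs n) x) \<longlonglongrightarrow> 0) \<longrightarrow> E x \<le> liminf (\<lambda>n. E (xs n)))"

definition ed_prob :: "('a \<Rightarrow> 'a \<Rightarrow> ennreal) \<Rightarrow> 'a measure \<Rightarrow> bool" where
  "ed_prob d \<mu> \<longleftrightarrow> prob_space \<mu> \<and> space \<mu> = UNIV \<and> sets \<mu> = ed_borel d"

definition Var :: "('a \<Rightarrow> 'a \<Rightarrow> ennreal) \<Rightarrow> 'a measure \<Rightarrow> ennreal" where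
  "Var d \<mu> = (INF x. \<integral>\<^sup>+ z. (d x z)\<^sup>2 \<partial>\<mu>)"

definition barycenter :: "('a \<Rightarrow> 'a \<Rightarrow> ennreal) \<Rightarrow> 'a measure \<Rightarrow> 'a \<Rightarrow> bool" where
  "barycenter d \<mu> x \<longleftrightarrow> (\<integral>\<^sup>+ z. (d x z)\<^sup>2 \<partial>\<mu>) = Var d \<mu>"

definition ereal_integral :: "'a measure \<Rightarrow> ('a \<Rightarrow> ereal) \<Rightarrow> ereal" where
  "ereal_integral \<mu> E =
     enn2ereal (\<integral>\<^sup>+ z. e2ennreal (E z) \<partial>\<mu>) - enn2ereal (\<integral>\<^sup>+ z. e2ennreal (- E z) \<partial>\<mu>)"

definition domE :: "('a \<Rightarrow> ereal) \<Rightarrow> 'a set" where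
  "domE E = {z. E z < \<infinity>}"

definition ed_closure :: "('a \<Rightarrow> 'a \<Rightarrow> ennreal) \<Rightarrow> 'a set \<Rightarrow> 'a set" where
  "ed_closure d A = {w. \<forall>r::real>0. \<exists>z\<in>A. d w z < ennreal r}"

definition loc_abs_cont :: "('a \<Rightarrow> 'a \<Rightarrow> ennreal) \<Rightarrow> (real \<Rightarrow> 'a) \<Rightarrow> bool" where
  "loc_abs_cont d y \<longleftrightarrow>
     (\<exists>m::real \<Rightarrow> real. (\<forall>r>0. m r \<ge> 0) \<and>
        (\<forall>a b. 0 < a \<longrightarrow> m absolutely_integrable_on {a..b}) \<and>
        (\<forall>s t. 0 < s \<longrightarrow> s \<le> t \<longrightarrow> d (y s) (y t) \<le> ennreal (integral {s..t} m)))"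

definition EVI_flow ::
  "('a \<Rightarrow> 'a \<Rightarrow> ennreal) \<Rightarrow> real \<Rightarrow> ('a \<Rightarrow> ereal) \<Rightarrow> 'a \<Rightarrow> (real \<Rightarrow> 'a) \<Rightarrow> bool" where
  "EVI_flow d K E y0 y \<longleftrightarrow>
     loc_abs_cont d y \<and>
     ((\<lambda>t. d (y t) y0) \<longlongrightarrow> 0) (at_right 0) \<and>
     (\<forall>z\<in>domE E. (\<exists>t>0. d z (y t) < \<infinity>) \<longrightarrow>
        (AE t in lborel. t > 0 \<longrightarrow>
           (\<exists>D. ((\<lambda>s. enn2real ((d (y s) z)\<^sup>2)) has_real_derivative D) (at t) \<and>
                ereal (D / 2 + K / 2 * enn2real ((d (y t) z)\<^sup>2)) \<le> E z - E (y t)))) \<and>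
     (y0 \<notin> domE E \<longrightarrow>
        Liminf (at_right 0) (\<lambda>t. E (y t)) \<ge> E y0 \<and>
        (\<forall>w\<in>ed_closure d (domE E). ((\<lambda>t. d (y t) w) \<longlongrightarrow> d y0 w) (at_right 0)))"

definition I_K :: "real \<Rightarrow> real \<Rightarrow> real" where
  "I_K K t = integral {0..t} (\<lambda>r. exp (K * r))"

end

theory Submission
  imports Defs
begin

(* Multiplying the EVI_K inequality by e^{Kr} and integrating over r in (0,t] gives, for every test
   point z of finite energy,
     e^{Kt} d^2(y_t, z) - d^2(y, z) <= 2 I_K(t) (E z - E(y_t)),
   where E(y_r) has been replaced by E(y_t) because the energy is non-increasing along the flow.
   Integrating in z against mu, the left-hand side is at least e^{Kt} Var(mu) - Var(mu) - eps, and
   e^{Kt} - 1 = K I_K(t).  The barycentric inequality is the case eps = 0 combined with lower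
   semicontinuity of E as t -> 0.  As the EVI holds only for almost every r, the integration in time
   uses a fundamental theorem of calculus for functions whose increments are dominated by integrals. *)

section \<open>Functions with dominated increments\<close>

definition dominated_increments :: "real \<Rightarrow> real \<Rightarrow> (real \<Rightarrow> real) \<Rightarrow> bool" where
  "dominated_increments a b h \<longleftrightarrow>
     (\<exists>M. M integrable_on {a..b} \<and> (\<forall>x\<in>{a..b}. 0 \<le> M x) \<and>
        (\<forall>u v. a \<le> u \<longrightarrow> u \<le> v \<longrightarrow> v \<le> b \<longrightarrow> \<bar>h v - h u\<bar> \<le> integral {u..v} M))"

lemma dominated_incrementsE:
  assumes "dominated_increments a b h"
  obtains M where "M integrable_on {a..b}" "\<And>x. x \<in> {a..b} \<Longrightarrow> 0 \<le> M x"
    "\<And>u v. a \<le> u \<Longrightarrow> u \<le> v \<Longrightarrow> v \<le> b \<Longrightarrow> \<bar>h v - h u\<bar> \<le> integral {u..v} M"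
  using assms unfolding dominated_increments_def by blast

lemma integrable_on_subinterval_real:
  fixes M :: "real \<Rightarrow> real"
  shows "M integrable_on {a..b} \<Longrightarrow> a \<le> u \<Longrightarrow> v \<le> b \<Longrightarrow> M integrable_on {u..v}"
  by (rule integrable_on_subinterval) auto

lemma nonpos_derivative_local_increment:
  fixes h :: "real \<Rightarrow> real"
  assumes "(h has_real_derivative D) (at x)" "D \<le> 0" "e > 0"
  obtains \<delta> where "\<delta> > 0"
    "\<And>u v. u \<le> x \<Longrightarrow> x \<le> v \<Longrightarrow> x - u < \<delta> \<Longrightarrow> v - x < \<delta> \<Longrightarrow> h v - h u \<le> e * (v - u)"
proof -
  have "(h has_derivative (\<lambda>u. D * u)) (at x)"
    using assms(1) by (simp add: has_field_derivative_def)
  then obtain \<delta> where \<delta>: "\<delta> > 0"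
    "\<And>y. norm (y - x) < \<delta> \<Longrightarrow> norm (h y - h x - D * (y - x)) \<le> e * norm (y - x)"
    using assms(3) unfolding has_derivative_at_alt by blast
  show ?thesis
  proof (rule that[OF \<delta>(1)])
    fix u v assume uv: "u \<le> x" "x \<le> v" "x - u < \<delta>" "v - x < \<delta>"
    have "D * (v - x) \<le> 0" "D * (u - x) \<ge> 0"
      using assms(2) uv by (simp_all add: mult_nonpos_nonneg mult_nonpos_nonpos)
    then have "h v - h x \<le> e * (v - x)" "h x - h u \<le> e * (x - u)"
      using \<delta>(2)[of v] \<delta>(2)[of u] uv by auto
    then show "h v - h u \<le> e * (v - u)" by (simp add: algebra_simps)
  qed
qed

lemma nonpos_derivative_slope_gauge:
  fixes h :: "real \<Rightarrow> real"
  assumes "\<And>x. x \<in> S \<Longrightarrow> \<exists>D. (h has_real_derivative D) (at x) \<and> D \<le> 0" "e > 0"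
  obtains \<delta> where "\<And>x. \<delta> x > 0" "\<And>x u v. x \<in> S \<Longrightarrow> u \<le> x \<Longrightarrow> x \<le> v \<Longrightarrow>
      x - u < \<delta> x \<Longrightarrow> v - x < \<delta> x \<Longrightarrow> h v - h u \<le> e * (v - u)"
proof -
  have "\<forall>x. \<exists>\<delta>>0. x \<in> S \<longrightarrow> (\<forall>u v. u \<le> x \<longrightarrow> x \<le> v \<longrightarrow> x - u < \<delta> \<longrightarrow> v - x < \<delta> \<longrightarrow>
      h v - h u \<le> e * (v - u))"
    by (metis assms nonpos_derivative_local_increment zero_less_one)
  then show ?thesis using that by metis
qed

lemma integral_sum_at_negligible_tags_small:
  fixes M :: "real \<Rightarrow> real"
  assumes M: "M integrable_on cbox a b" and N: "negligible N" and e: "e > 0"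
  obtains \<gamma> where "gauge \<gamma>"
    "\<And>p. p tagged_partial_division_of cbox a b \<Longrightarrow> \<gamma> fine p \<Longrightarrow> fst ` p \<subseteq> N \<Longrightarrow>
       (\<Sum>(x,K)\<in>p. integral K M) < e"
proof -
  define g where "g x = (if x \<in> N then M x else 0)" for x
  have g0: "(g has_integral 0) T" for T
    by (rule has_integral_negligible[OF N]) (auto simp: g_def)
  then have g: "g integrable_on cbox a b" by blast
  have e2: "e / 2 > 0" using e by simp
  obtain \<gamma>1 where \<gamma>1: "gauge \<gamma>1" and H1: "\<And>p. p tagged_partial_division_of cbox a b \<Longrightarrow>
      \<gamma>1 fine p \<Longrightarrow> (\<Sum>(x,K)\<in>p. norm (measure lborel K *\<^sub>R M x - integral K M)) < e / 2"
    by (rule Henstock_lemma[OF M e2]) blast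
  obtain \<gamma>2 where \<gamma>2: "gauge \<gamma>2" and H2: "\<And>p. p tagged_partial_division_of cbox a b \<Longrightarrow>
      \<gamma>2 fine p \<Longrightarrow> (\<Sum>(x,K)\<in>p. norm (measure lborel K *\<^sub>R g x - integral K g)) < e / 2"
    by (rule Henstock_lemma[OF g e2]) blast
  show ?thesis
  proof (rule that[OF gauge_Int[OF \<gamma>1 \<gamma>2]])
    fix p assume p: "p tagged_partial_division_of cbox a b" "(\<lambda>x. \<gamma>1 x \<inter> \<gamma>2 x) fine p"
      and tags: "fst ` p \<subseteq> N"
    \<comment> \<open>At tags in N the Riemann terms of M and g agree, and g has vanishing integrals.\<close>
    have "(\<Sum>(x,K)\<in>p. integral K M) \<le> (\<Sum>(x,K)\<in>p. norm (measure lborel K *\<^sub>R M x - integral K M)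
        + norm (measure lborel K *\<^sub>R g x - integral K g))"
    proof (rule sum_mono)
      fix xK assume "xK \<in> p"
      moreover obtain x K where "xK = (x, K)" by fastforce
      ultimately have "x \<in> N" using tags by force
      then have "g x = M x" by (simp add: g_def)
      then show "(\<lambda>(x,K). integral K M) xK \<le> (\<lambda>(x,K). norm (measure lborel K *\<^sub>R M x - integral K M)
        + norm (measure lborel K *\<^sub>R g x - integral K g)) xK"
        using \<open>xK = (x, K)\<close> integral_unique[OF g0] by simp
    qed
    also have "\<dots> = (\<Sum>(x,K)\<in>p. norm (measure lborel K *\<^sub>R M x - integral K M))
        + (\<Sum>(x,K)\<in>p. norm (measure lborel K *\<^sub>R g x - integral K g))"
      by (simp add: sum.distrib case_prod_unfold)
    also have "\<dots> < e / 2 + e / 2"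
      using p(2) unfolding fine_Int by (intro add_strict_mono H1[OF p(1)] H2[OF p(1)]) auto
    finally show "(\<Sum>(x,K)\<in>p. integral K M) < e" by simp
  qed
qed

lemma tagged_division_tag_increment_le:
  fixes h :: "real \<Rightarrow> real"
  assumes "p tagged_division_of {a..b}" "(x, K) \<in> p"
    and "\<And>u v. K = {u..v} \<Longrightarrow> a \<le> u \<Longrightarrow> u \<le> x \<Longrightarrow> x \<le> v \<Longrightarrow> v \<le> b \<Longrightarrow> h v - h u \<le> B"
  shows "h (Sup K) - h (Inf K) \<le> B"
proof -
  obtain u v where "K = cbox u v" "x \<in> K" "K \<subseteq> {a..b}"
    using tagged_division_ofD(2-4)[OF assms(1,2)] by metis
  then show ?thesis using assms(3)[of u v] by auto
qed

lemma tagged_division_sum_increments_le_integral: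
  fixes h M :: "real \<Rightarrow> real"
  assumes p: "p tagged_division_of {a..b}" and "q \<subseteq> p"
    and hM: "\<And>u v. a \<le> u \<Longrightarrow> u \<le> v \<Longrightarrow> v \<le> b \<Longrightarrow> h v - h u \<le> integral {u..v} M"
  shows "(\<Sum>(x,K)\<in>q. h (Sup K) - h (Inf K)) \<le> (\<Sum>(x,K)\<in>q. integral K M)"
proof (rule sum_mono)
  fix xK assume "xK \<in> q"
  then obtain x K where "xK = (x, K)" "(x, K) \<in> p" using \<open>q \<subseteq> p\<close> by (cases xK) auto
  then show "(\<lambda>(x,K). h (Sup K) - h (Inf K)) xK \<le> (\<lambda>(x,K). integral K M) xK"
    using tagged_division_tag_increment_le[OF p, of x K h "integral K M"] hM by auto
qed

lemma tagged_division_sum_increments_le_slope: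
  fixes h :: "real \<Rightarrow> real"
  assumes p: "p tagged_division_of {a..b}" and "a \<le> b" "e \<ge> 0" "q \<subseteq> p"
    and slope: "\<And>x u v. (x, {u..v}) \<in> q \<Longrightarrow> u \<le> x \<Longrightarrow> x \<le> v \<Longrightarrow> h v - h u \<le> e * (v - u)"
  shows "(\<Sum>(x,K)\<in>q. h (Sup K) - h (Inf K)) \<le> e * (b - a)"
proof -
  have "(\<Sum>(x,K)\<in>q. h (Sup K) - h (Inf K)) \<le> (\<Sum>(x,K)\<in>q. e * measure lborel K)"
  proof (rule sum_mono)
    fix xK assume "xK \<in> q"
    then obtain x K where xK: "xK = (x, K)" "(x, K) \<in> q" by (cases xK) auto
    then show "(\<lambda>(x,K). h (Sup K) - h (Inf K)) xK \<le> (\<lambda>(x,K). e * measure lborel K) xK"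
      using tagged_division_tag_increment_le[OF p, of x K h "e * measure lborel K"] slope \<open>q \<subseteq> p\<close>
      by auto
  qed
  also have "\<dots> \<le> (\<Sum>(x,K)\<in>p. e * measure lborel K)"
    using p \<open>q \<subseteq> p\<close> \<open>e \<ge> 0\<close> by (intro sum_mono2) auto
  also have "\<dots> = e * (b - a)"
    using additive_content_tagged_division[of p a b] p \<open>a \<le> b\<close>
    by (simp add: sum_distrib_left[symmetric] case_prod_unfold)
  finally show ?thesis .
qed

lemma dominated_increments_slope_bound:
  assumes ab: "a \<le> b" and h: "dominated_increments a b h" and N: "negligible N"
    and der: "\<And>x. x \<in> {a..b} - N \<Longrightarrow> \<exists>D. (h has_real_derivative D) (at x) \<and> D \<le> 0"
    and e: "e > 0"
  shows "h b - h a \<le> e * (b - a) + e"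
proof -
  obtain M where M: "M integrable_on {a..b}"
    and hM: "\<And>u v. a \<le> u \<Longrightarrow> u \<le> v \<Longrightarrow> v \<le> b \<Longrightarrow> h v - h u \<le> integral {u..v} M"
    using h by (rule dominated_incrementsE) (meson abs_le_D1 order_trans)
  have "M integrable_on cbox a b" using M by simp
  then obtain \<gamma>0 where \<gamma>0: "gauge \<gamma>0" and small: "\<And>p. p tagged_partial_division_of cbox a b \<Longrightarrow>
      \<gamma>0 fine p \<Longrightarrow> fst ` p \<subseteq> N \<Longrightarrow> (\<Sum>(x,K)\<in>p. integral K M) < e"
    by (rule integral_sum_at_negligible_tags_small[OF _ N e]) blast
  obtain \<delta> where \<delta>: "\<And>x. \<delta> x > 0" and slope: "\<And>x u v. x \<in> {a..b} - N \<Longrightarrow> u \<le> x \<Longrightarrow> x \<le> v \<Longrightarrow>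
      x - u < \<delta> x \<Longrightarrow> v - x < \<delta> x \<Longrightarrow> h v - h u \<le> e * (v - u)"
    using nonpos_derivative_slope_gauge[OF der e] by blast
  have "gauge (\<lambda>x. \<gamma>0 x \<inter> ball x (\<delta> x))"
    using \<delta> by (intro gauge_Int \<gamma>0 gauge_ball_dependent) auto
  then obtain p where p: "p tagged_division_of {a..b}" and fine: "(\<lambda>x. \<gamma>0 x \<inter> ball x (\<delta> x)) fine p"
    using fine_division_exists_real by metis
  define f where "f = (\<lambda>(x::real, K::real set). h (Sup K) - h (Inf K))"
  define p1 where "p1 = {(x, K) \<in> p. x \<in> N}"
  have "p1 \<subseteq> p" "finite p" using p by (auto simp: p1_def)
  then have "h b - h a = sum f p1 + sum f (p - p1)"
    using additive_tagged_division_1[OF ab p, of h] sum.subset_diff[of p1 p f] by (simp add: f_def)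
  also have "sum f p1 < e"
  proof -
    have "sum f p1 \<le> (\<Sum>(x,K)\<in>p1. integral K M)"
      unfolding f_def by (rule tagged_division_sum_increments_le_integral[OF p \<open>p1 \<subseteq> p\<close> hM])
    also have "\<dots> < e"
    proof (rule small)
      show "p1 tagged_partial_division_of cbox a b"
        using p \<open>p1 \<subseteq> p\<close> tagged_partial_division_subset by (auto simp: tagged_division_of_def)
      show "\<gamma>0 fine p1" using fine fine_subset[OF \<open>p1 \<subseteq> p\<close>] by (simp add: fine_Int)
    qed (auto simp: p1_def)
    finally show ?thesis .
  qed
  also have "sum f (p - p1) \<le> e * (b - a)"
    unfolding f_def
  proof (rule tagged_division_sum_increments_le_slope[OF p ab _ Diff_subset])
    fix x u v assume xK: "(x, {u..v}) \<in> p - p1" and "u \<le> x" "x \<le> v"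
    have "{u..v} \<subseteq> ball x (\<delta> x)" "{u..v} \<subseteq> {a..b}"
      using fine tagged_division_ofD(3)[OF p] xK unfolding fine_def by blast+
    moreover have "u \<in> {u..v}" "v \<in> {u..v}" "x \<in> {u..v}" using \<open>u \<le> x\<close> \<open>x \<le> v\<close> by auto
    ultimately have "u \<in> ball x (\<delta> x)" "v \<in> ball x (\<delta> x)" "x \<in> {a..b}" by blast+
    then have "x - u < \<delta> x" "v - x < \<delta> x" "x \<in> {a..b}" by (auto simp: dist_real_def)
    then show "h v - h u \<le> e * (v - u)"
      using slope[of x u v] xK \<open>u \<le> x\<close> \<open>x \<le> v\<close> by (auto simp: p1_def)
  qed (use e in simp)
  finally show ?thesis by simp
qed

lemma dominated_increments_nonpos_derivative_imp_le:
  assumes "a \<le> b" "dominated_increments a b h" "negligible N"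
    and "\<And>x. x \<in> {a..b} - N \<Longrightarrow> \<exists>D. (h has_real_derivative D) (at x) \<and> D \<le> 0"
  shows "h b \<le> h a"
proof (rule field_le_epsilon)
  fix e :: real assume "e > 0"
  define c where "c = b - a + 1"
  have "c > 0" using \<open>a \<le> b\<close> by (simp add: c_def)
  then have "h b - h a \<le> e / c * (b - a) + e / c"
    using assms \<open>e > 0\<close> by (intro dominated_increments_slope_bound) auto
  also have "\<dots> = e / c * ((b - a) + 1)" by (simp add: distrib_left)
  also have "\<dots> = e" using \<open>c > 0\<close> by (simp add: c_def)
  finally show "h b \<le> h a + e" by simp
qed

lemma dominated_increments_bounded:
  assumes "dominated_increments a b h"
  obtains B where "\<And>u. u \<in> {a..b} \<Longrightarrow> \<bar>h u\<bar> \<le> B"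
proof -
  obtain M where M: "M integrable_on {a..b}" "\<And>x. x \<in> {a..b} \<Longrightarrow> 0 \<le> M x"
    and h: "\<And>u v. a \<le> u \<Longrightarrow> u \<le> v \<Longrightarrow> v \<le> b \<Longrightarrow> \<bar>h v - h u\<bar> \<le> integral {u..v} M"
    using assms by (rule dominated_incrementsE) blast
  have "\<bar>h u\<bar> \<le> \<bar>h a\<bar> + integral {a..b} M" if "u \<in> {a..b}" for u
  proof -
    have "integral {a..u} M \<le> integral {a..b} M"
      using that M by (intro integral_subset_le integrable_on_subinterval_real[OF M(1)]) auto
    moreover have "\<bar>h u - h a\<bar> \<le> integral {a..u} M" using h[of a u] that by simp
    ultimately show ?thesis by linarith
  qed
  then show ?thesis using that by blast
qed

lemma dominated_increments_add:
  assumes "dominated_increments a b f" "dominated_increments a b g"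
  shows "dominated_increments a b (\<lambda>x. f x + g x)"
proof -
  obtain M1 where M1: "M1 integrable_on {a..b}" "\<And>x. x \<in> {a..b} \<Longrightarrow> 0 \<le> M1 x"
    and f: "\<And>u v. a \<le> u \<Longrightarrow> u \<le> v \<Longrightarrow> v \<le> b \<Longrightarrow> \<bar>f v - f u\<bar> \<le> integral {u..v} M1"
    using assms(1) by (rule dominated_incrementsE) blast
  obtain M2 where M2: "M2 integrable_on {a..b}" "\<And>x. x \<in> {a..b} \<Longrightarrow> 0 \<le> M2 x"
    and g: "\<And>u v. a \<le> u \<Longrightarrow> u \<le> v \<Longrightarrow> v \<le> b \<Longrightarrow> \<bar>g v - g u\<bar> \<le> integral {u..v} M2"
    using assms(2) by (rule dominated_incrementsE) blast
  show ?thesis unfolding dominated_increments_def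
  proof (intro exI[of _ "\<lambda>x. M1 x + M2 x"] conjI ballI allI impI)
    show "(\<lambda>x. M1 x + M2 x) integrable_on {a..b}" using M1 M2 by (intro integrable_add)
    show "0 \<le> M1 x + M2 x" if "x \<in> {a..b}" for x using M1 M2 that by (simp add: add_nonneg_nonneg)
    fix u v assume uv: "a \<le> u" "u \<le> v" "v \<le> b"
    have "integral {u..v} (\<lambda>x. M1 x + M2 x) = integral {u..v} M1 + integral {u..v} M2"
      using uv by (intro integral_add integrable_on_subinterval_real[OF M1(1)]
          integrable_on_subinterval_real[OF M2(1)]) auto
    then show "\<bar>(f v + g v) - (f u + g u)\<bar> \<le> integral {u..v} (\<lambda>x. M1 x + M2 x)"
      using f[OF uv] g[OF uv] by linarith
  qed
qed

lemma dominated_increments_cmult: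
  assumes "dominated_increments a b f"
  shows "dominated_increments a b (\<lambda>x. c * f x)"
proof -
  obtain M where M: "M integrable_on {a..b}" "\<And>x. x \<in> {a..b} \<Longrightarrow> 0 \<le> M x"
    and f: "\<And>u v. a \<le> u \<Longrightarrow> u \<le> v \<Longrightarrow> v \<le> b \<Longrightarrow> \<bar>f v - f u\<bar> \<le> integral {u..v} M"
    using assms by (rule dominated_incrementsE) blast
  show ?thesis unfolding dominated_increments_def
  proof (intro exI[of _ "\<lambda>x. \<bar>c\<bar> * M x"] conjI ballI allI impI)
    show "(\<lambda>x. \<bar>c\<bar> * M x) integrable_on {a..b}" using M by (intro integrable_on_mult_right)
    show "0 \<le> \<bar>c\<bar> * M x" if "x \<in> {a..b}" for x using M that by simp
    fix u v assume uv: "a \<le> u" "u \<le> v" "v \<le> b"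
    have "\<bar>c * f v - c * f u\<bar> = \<bar>c\<bar> * \<bar>f v - f u\<bar>" by (simp add: abs_mult[symmetric] algebra_simps)
    also have "\<dots> \<le> \<bar>c\<bar> * integral {u..v} M" using f[OF uv] by (simp add: mult_left_mono)
    finally show "\<bar>c * f v - c * f u\<bar> \<le> integral {u..v} (\<lambda>x. \<bar>c\<bar> * M x)" by simp
  qed
qed

lemma dominated_increments_diff:
  "dominated_increments a b f \<Longrightarrow> dominated_increments a b g \<Longrightarrow> dominated_increments a b (\<lambda>x. f x - g x)"
  using dominated_increments_add[of a b f "\<lambda>x. (-1) * g x"] dominated_increments_cmult[of a b g "-1"]
  by simp

lemma dominated_increments_mult:
  assumes "dominated_increments a b f" "dominated_increments a b g"
  shows "dominated_increments a b (\<lambda>x. f x * g x)"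
proof -
  obtain M1 where M1: "M1 integrable_on {a..b}" "\<And>x. x \<in> {a..b} \<Longrightarrow> 0 \<le> M1 x"
    and f: "\<And>u v. a \<le> u \<Longrightarrow> u \<le> v \<Longrightarrow> v \<le> b \<Longrightarrow> \<bar>f v - f u\<bar> \<le> integral {u..v} M1"
    using assms(1) by (rule dominated_incrementsE) blast
  obtain M2 where M2: "M2 integrable_on {a..b}" "\<And>x. x \<in> {a..b} \<Longrightarrow> 0 \<le> M2 x"
    and g: "\<And>u v. a \<le> u \<Longrightarrow> u \<le> v \<Longrightarrow> v \<le> b \<Longrightarrow> \<bar>g v - g u\<bar> \<le> integral {u..v} M2"
    using assms(2) by (rule dominated_incrementsE) blast
  obtain B1 where B1: "\<And>u. u \<in> {a..b} \<Longrightarrow> \<bar>f u\<bar> \<le> B1"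
    using assms(1) by (rule dominated_increments_bounded) blast
  obtain B2 where B2: "\<And>u. u \<in> {a..b} \<Longrightarrow> \<bar>g u\<bar> \<le> B2"
    using assms(2) by (rule dominated_increments_bounded) blast
  show ?thesis unfolding dominated_increments_def
  proof (intro exI[of _ "\<lambda>x. B1 * M2 x + B2 * M1 x"] conjI ballI allI impI)
    show "(\<lambda>x. B1 * M2 x + B2 * M1 x) integrable_on {a..b}"
      using M1 M2 by (intro integrable_add integrable_on_mult_right)
    show "0 \<le> B1 * M2 x + B2 * M1 x" if "x \<in> {a..b}" for x
    proof -
      have "0 \<le> B1" "0 \<le> B2" using B1[OF that] B2[OF that] by linarith+
      then show ?thesis using M1(2)[OF that] M2(2)[OF that] by simp
    qed
    fix u v assume uv: "a \<le> u" "u \<le> v" "v \<le> b"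
    have "f v * g v - f u * g u = f v * (g v - g u) + g u * (f v - f u)" by (simp add: algebra_simps)
    then have "\<bar>f v * g v - f u * g u\<bar> \<le> \<bar>f v\<bar> * \<bar>g v - g u\<bar> + \<bar>g u\<bar> * \<bar>f v - f u\<bar>"
      by (simp add: abs_mult[symmetric])
    also have "\<dots> \<le> B1 * integral {u..v} M2 + B2 * integral {u..v} M1"
      using uv B1[of v] B2[of u] f[OF uv] g[OF uv] by (intro add_mono mult_mono) auto
    also have "\<dots> = integral {u..v} (\<lambda>x. B1 * M2 x + B2 * M1 x)"
      using uv by (simp add: integral_add integrable_on_mult_right
          integrable_on_subinterval_real[OF M1(1)] integrable_on_subinterval_real[OF M2(1)])
    finally show "\<bar>f v * g v - f u * g u\<bar> \<le> integral {u..v} (\<lambda>x. B1 * M2 x + B2 * M1 x)" .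
  qed
qed

lemma dominated_increments_bounded_derivative:
  assumes "\<And>x. x \<in> {a..b} \<Longrightarrow> (g has_real_derivative g' x) (at x)"
    and "\<And>x. x \<in> {a..b} \<Longrightarrow> \<bar>g' x\<bar> \<le> L"
  shows "dominated_increments a b g"
  unfolding dominated_increments_def
proof (intro exI[of _ "\<lambda>_. L"] conjI ballI allI impI)
  show "(\<lambda>_. L) integrable_on {a..b}" by (rule integrable_const_ivl)
  show "0 \<le> L" if "x \<in> {a..b}" for x using assms(2)[OF that] by linarith
  fix u v assume uv: "a \<le> u" "u \<le> v" "v \<le> b"
  have "\<bar>g v - g u\<bar> \<le> L * (v - u)"
  proof (cases "u = v")
    case False
    then obtain z where z: "u < z" "z < v" "g v - g u = (v - u) * g' z"
      using MVT2[of u v g g'] assms(1) uv by force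
    then show ?thesis using assms(2)[of z] uv by (simp add: abs_mult mult.commute mult_right_mono)
  qed simp
  then show "\<bar>g v - g u\<bar> \<le> integral {u..v} (\<lambda>_. L)" using uv by (simp add: mult.commute)
qed

definition exp_primitive :: "real \<Rightarrow> real \<Rightarrow> real" where
  "exp_primitive K r = (if K = 0 then r else (exp (K * r) - 1) / K)"

lemma exp_primitive_has_derivative: "(exp_primitive K has_real_derivative exp (K * r)) (at r)"
proof (cases "K = 0")
  case True
  then have "exp_primitive K = (\<lambda>r. r)" by (auto simp: exp_primitive_def)
  then show ?thesis using True by (auto intro!: derivative_eq_intros)
next
  case False
  then have "exp_primitive K = (\<lambda>r. (exp (K * r) - 1) / K)" by (auto simp: exp_primitive_def)
  then show ?thesis using False by (auto intro!: derivative_eq_intros)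
qed

lemma exp_primitive_0 [simp]: "exp_primitive K 0 = 0"
  by (simp add: exp_primitive_def)

lemma mult_exp_primitive: "K * exp_primitive K r = exp (K * r) - 1"
  by (simp add: exp_primitive_def)

lemma exp_primitive_pos: "r > 0 \<Longrightarrow> exp_primitive K r > 0"
  by (cases K "0::real" rule: linorder_cases)
     (simp_all add: exp_primitive_def divide_neg_neg mult_neg_pos)

lemma I_K_eq_exp_primitive: "t \<ge> 0 \<Longrightarrow> I_K K t = exp_primitive K t"
  using fundamental_theorem_of_calculus[of 0 t "exp_primitive K" "\<lambda>r. exp (K * r)"]
  by (auto simp: I_K_def integral_unique has_real_derivative_iff_has_vector_derivative[symmetric]
      intro: DERIV_subset[OF exp_primitive_has_derivative])

lemma exp_le_on_interval:
  fixes K s t x :: real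
  assumes "x \<in> {s..t}"
  shows "exp (K * x) \<le> exp (\<bar>K\<bar> * (\<bar>s\<bar> + \<bar>t\<bar>))"
proof -
  have "K * x \<le> \<bar>K * x\<bar>" by simp
  also have "\<dots> = \<bar>K\<bar> * \<bar>x\<bar>" by (rule abs_mult)
  also have "\<dots> \<le> \<bar>K\<bar> * (\<bar>s\<bar> + \<bar>t\<bar>)" using assms by (intro mult_left_mono) auto
  finally show ?thesis by simp
qed

lemma dominated_increments_exp: "dominated_increments s t (\<lambda>r. exp (K * r :: real))"
proof (rule dominated_increments_bounded_derivative)
  show "((\<lambda>r. exp (K * r)) has_real_derivative K * exp (K * x)) (at x)" for x
    by (auto intro!: derivative_eq_intros)
  show "\<bar>K * exp (K * x)\<bar> \<le> \<bar>K\<bar> * exp (\<bar>K\<bar> * (\<bar>s\<bar> + \<bar>t\<bar>))" if "x \<in> {s..t}" for x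
    using exp_le_on_interval[OF that] by (simp add: abs_mult mult_left_mono)
qed

lemma dominated_increments_exp_primitive: "dominated_increments s t (exp_primitive K)"
  using exp_le_on_interval[of _ s t K]
  by (intro dominated_increments_bounded_derivative[OF exp_primitive_has_derivative]) auto

section \<open>Extended metrics and locally absolutely continuous curves\<close>

lemma ext_metric_sym: "ext_metric d \<Longrightarrow> d x y = d y x"
  by (simp add: ext_metric_def)

lemma ext_metric_triangle: "ext_metric d \<Longrightarrow> d x z \<le> d x y + d y z"
  by (simp add: ext_metric_def)

lemma ext_metric_eq_0_iff: "ext_metric d \<Longrightarrow> d x y = 0 \<longleftrightarrow> x = y"
  by (simp add: ext_metric_def)

lemma ext_metric_finite_trans:
  assumes "ext_metric d" "d x y < \<top>" "d y z < \<top>"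
  shows "d x z < \<top>"
  using ext_metric_triangle[OF assms(1), of x z y] assms(2,3) by (simp add: le_less_trans)

lemma ext_metric_enn2real_triangle:
  assumes "ext_metric d" "d x y < \<top>" "d y z < \<top>"
  shows "enn2real (d x z) \<le> enn2real (d x y) + enn2real (d y z)"
proof -
  have "enn2real (d x z) \<le> enn2real (d x y + d y z)"
    using assms by (intro enn2real_mono ext_metric_triangle) auto
  then show ?thesis using enn2real_plus[OF assms(2,3)] by simp
qed

lemma ext_metric_enn2real_reverse_triangle:
  assumes "ext_metric d" "d x y < \<top>" "d y z < \<top>"
  shows "\<bar>enn2real (d x z) - enn2real (d y z)\<bar> \<le> enn2real (d x y)"
proof -
  have "d y x < \<top>" using assms(2) ext_metric_sym[OF assms(1), of x y] by simp
  moreover have "d x z < \<top>" by (rule ext_metric_finite_trans[OF assms])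
  ultimately show ?thesis
    using ext_metric_enn2real_triangle[OF assms] ext_metric_enn2real_triangle[OF assms(1), of y x z]
      ext_metric_sym[OF assms(1), of x y] by auto
qed

lemma loc_abs_contE:
  assumes "loc_abs_cont d y"
  obtains m where "\<And>r. r > 0 \<Longrightarrow> 0 \<le> m r" "\<And>a b. 0 < a \<Longrightarrow> m integrable_on {a..b}"
    "\<And>s t. 0 < s \<Longrightarrow> s \<le> t \<Longrightarrow> d (y s) (y t) \<le> ennreal (integral {s..t} m)"
  using assms unfolding loc_abs_cont_def absolutely_integrable_on_def by blast

context
  fixes d :: "'a \<Rightarrow> 'a \<Rightarrow> ennreal" and y :: "real \<Rightarrow> 'a"
  assumes ext_metric: "ext_metric d" and curve: "loc_abs_cont d y"
begin

lemma loc_abs_cont_dist_finite: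
  assumes "s > 0" "t > 0"
  shows "d (y s) (y t) < \<top>"
proof -
  have fin: "d (y s) (y t) < \<top>" if "0 < s" "s \<le> t" for s t
  proof -
    obtain m where "\<And>s t. 0 < s \<Longrightarrow> s \<le> t \<Longrightarrow> d (y s) (y t) \<le> ennreal (integral {s..t} m)"
      using curve by (rule loc_abs_contE) blast
    from this[OF that] show ?thesis by (rule le_less_trans) simp
  qed
  show ?thesis
  proof (cases "s \<le> t")
    case False
    then show ?thesis using fin[of t s] assms ext_metric_sym[OF ext_metric, of "y s" "y t"] by simp
  qed (use fin assms in auto)
qed

lemma loc_abs_cont_dist_dominated:
  assumes "0 < a" and z: "d z (y a) < \<top>"
  shows "dominated_increments a b (\<lambda>r. enn2real (d (y r) z))"
proof -
  obtain m where m: "\<And>r. r > 0 \<Longrightarrow> 0 \<le> m r" "\<And>a b. 0 < a \<Longrightarrow> m integrable_on {a..b}"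
    and dist: "\<And>s t. 0 < s \<Longrightarrow> s \<le> t \<Longrightarrow> d (y s) (y t) \<le> ennreal (integral {s..t} m)"
    using curve by (rule loc_abs_contE) blast
  show ?thesis unfolding dominated_increments_def
  proof (intro exI[of _ m] conjI ballI allI impI)
    show "m integrable_on {a..b}" using m(2) \<open>0 < a\<close> .
    show "0 \<le> m x" if "x \<in> {a..b}" for x using m(1) that \<open>0 < a\<close> by simp
    fix u v assume uv: "a \<le> u" "u \<le> v" "v \<le> b"
    have uz: "d (y u) z < \<top>"
      using ext_metric_finite_trans[OF ext_metric loc_abs_cont_dist_finite[of u a]] z
        ext_metric_sym[OF ext_metric, of z] \<open>0 < a\<close> uv by auto
    have "\<bar>enn2real (d (y v) z) - enn2real (d (y u) z)\<bar> \<le> enn2real (d (y v) (y u))"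
      using \<open>0 < a\<close> uv by (intro ext_metric_enn2real_reverse_triangle[OF ext_metric _ uz]
          loc_abs_cont_dist_finite) auto
    also have "\<dots> \<le> integral {u..v} m"
      using dist[of u v] ext_metric_sym[OF ext_metric, of "y u" "y v"] \<open>0 < a\<close> uv
        integral_nonneg[OF m(2), of u v] m(1)
      by (intro enn2real_leI) auto
    finally show "\<bar>enn2real (d (y v) z) - enn2real (d (y u) z)\<bar> \<le> integral {u..v} m" .
  qed
qed

lemma loc_abs_cont_LIMSEQ:
  assumes t: "t > 0" and sn: "sn \<longlonglongrightarrow> t"
  shows "(\<lambda>n. d (y (sn n)) (y t)) \<longlonglongrightarrow> 0"
proof -
  obtain m where m: "\<And>r. r > 0 \<Longrightarrow> 0 \<le> m r" "\<And>a b. 0 < a \<Longrightarrow> m integrable_on {a..b}"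
    and dist: "\<And>s t. 0 < s \<Longrightarrow> s \<le> t \<Longrightarrow> d (y s) (y t) \<le> ennreal (integral {s..t} m)"
    using curve by (rule loc_abs_contE) blast
  define F where "F x = integral {t/2..x} m" for x
  have "continuous_on {t/2..t+1} F" unfolding F_def
    using t by (intro indefinite_integral_continuous_1 m(2)) auto
  have near: "eventually (\<lambda>n. sn n \<in> {t/2<..<t+1}) sequentially"
    using sn t by (intro topological_tendstoD) auto
  have "(\<lambda>n. F (sn n)) \<longlonglongrightarrow> F t"
    by (rule continuous_on_tendsto_compose[OF \<open>continuous_on {t/2..t+1} F\<close> sn])
      (use t in auto, auto intro: eventually_mono[OF near])
  then have "(\<lambda>n. ennreal \<bar>F (sn n) - F t\<bar>) \<longlonglongrightarrow> ennreal \<bar>F t - F t\<bar>"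
    by (intro tendsto_intros)
  then have lim0: "(\<lambda>n. ennreal \<bar>F (sn n) - F t\<bar>) \<longlonglongrightarrow> 0" by simp
  have "d (y s) (y t) \<le> ennreal \<bar>F s - F t\<bar>" if s: "s \<in> {t/2<..<t+1}" for s
  proof (cases "s \<le> t")
    case True
    have "integral {t/2..s} m + integral {s..t} m = integral {t/2..t} m"
      using True s t by (intro Henstock_Kurzweil_Integration.integral_combine m(2)) auto
    moreover have "0 \<le> integral {s..t} m"
      using s t by (intro integral_nonneg m(2)) (auto intro: m(1))
    ultimately have "integral {s..t} m = \<bar>F s - F t\<bar>" unfolding F_def by arith
    then show ?thesis using dist[of s t] True s t by auto
  next
    case False
    have "integral {t/2..t} m + integral {t..s} m = integral {t/2..s} m"
      using False s t by (intro Henstock_Kurzweil_Integration.integral_combine m(2)) auto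
    moreover have "0 \<le> integral {t..s} m"
      using t by (intro integral_nonneg m(2)) (auto intro: m(1))
    ultimately have "integral {t..s} m = \<bar>F s - F t\<bar>" unfolding F_def by arith
    then show ?thesis using dist[of t s] False t ext_metric_sym[OF ext_metric, of "y t"] by auto
  qed
  then show ?thesis
    by (intro tendsto_sandwich[OF _ _ tendsto_const lim0]) (auto intro: eventually_mono[OF near])
qed

end

lemma liminf_le_of_le: "(\<And>n. X n \<le> C) \<Longrightarrow> liminf X \<le> (C :: 'a :: complete_linorder)"
  by (rule order_trans[OF Liminf_le_Limsup Limsup_bounded]) auto

lemma enn2real_power2: "enn2real (x\<^sup>2) = (enn2real x)\<^sup>2"
  by (simp add: power2_eq_square enn2real_mult)

section \<open>EVI gradient flows\<close>

locale EVI_gradient_flow =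
  fixes d :: "'a \<Rightarrow> 'a \<Rightarrow> ennreal" and K :: real and E :: "'a \<Rightarrow> ereal"
    and y0 :: 'a and y :: "real \<Rightarrow> 'a"
  assumes ext_metric: "ext_metric d" and lsc: "ed_lsc d E" and E_not_minf: "\<And>x. E x \<noteq> -\<infinity>"
    and flow: "EVI_flow d K E y0 y"
begin

lemma flow_loc_abs_cont: "loc_abs_cont d y"
  using flow by (simp add: EVI_flow_def)

lemma flow_tendsto_start: "((\<lambda>t. d (y t) y0) \<longlongrightarrow> 0) (at_right 0)"
  using flow by (simp add: EVI_flow_def)

lemma EVI_except_negligible:
  assumes "E z < \<infinity>" "t > 0" "d z (y t) < \<top>"
  obtains N where "negligible N"
    "\<And>r. r > 0 \<Longrightarrow> r \<notin> N \<Longrightarrow> \<exists>D. ((\<lambda>s. enn2real ((d (y s) z)\<^sup>2)) has_real_derivative D) (at r) \<and>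
       ereal (D / 2 + K / 2 * enn2real ((d (y r) z)\<^sup>2)) \<le> E z - E (y r)"
proof -
  have evi: "\<forall>z\<in>domE E. (\<exists>t>0. d z (y t) < \<infinity>) \<longrightarrow> (AE r in lborel. r > 0 \<longrightarrow>
      (\<exists>D. ((\<lambda>s. enn2real ((d (y s) z)\<^sup>2)) has_real_derivative D) (at r) \<and>
        ereal (D / 2 + K / 2 * enn2real ((d (y r) z)\<^sup>2)) \<le> E z - E (y r)))"
    using flow unfolding EVI_flow_def by (elim conjE)
  have "z \<in> domE E" using assms(1) by (simp add: domE_def)
  moreover have "\<exists>t>0. d z (y t) < \<infinity>" using assms(2,3) by auto
  ultimately have "AE r in lebesgue. r > 0 \<longrightarrow>
      (\<exists>D. ((\<lambda>s. enn2real ((d (y s) z)\<^sup>2)) has_real_derivative D) (at r) \<and>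
        ereal (D / 2 + K / 2 * enn2real ((d (y r) z)\<^sup>2)) \<le> E z - E (y r))"
    using evi by (intro AE_completion) blast
  then obtain N where "negligible N" and N: "{r. \<not> (r > 0 \<longrightarrow>
      (\<exists>D. ((\<lambda>s. enn2real ((d (y s) z)\<^sup>2)) has_real_derivative D) (at r) \<and>
        ereal (D / 2 + K / 2 * enn2real ((d (y r) z)\<^sup>2)) \<le> E z - E (y r)))} \<subseteq> N"
    unfolding eventually_ae_filter_negligible by blast
  show ?thesis
    by (rule that[OF \<open>negligible N\<close>]) (use N in blast)
qed

lemma dist_start_finite:
  assumes "t > 0"
  shows "d (y t) y0 < \<top>"
proof -
  have "eventually (\<lambda>s. d (y s) y0 < 1) (at_right 0)"
    using flow_tendsto_start by (rule order_tendstoD) simp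
  then obtain b where "b > 0" and b: "\<And>s. s > 0 \<Longrightarrow> s < b \<Longrightarrow> d (y s) y0 < 1"
    unfolding eventually_at_right_field by auto
  then have "d (y (b/2)) y0 < 1" by simp
  then have "d (y (b/2)) y0 < \<top>" using ennreal_one_less_top less_trans by blast
  moreover have "d (y t) (y (b/2)) < \<top>"
    using loc_abs_cont_dist_finite[OF ext_metric flow_loc_abs_cont] assms \<open>b > 0\<close> by simp
  ultimately show ?thesis using ext_metric_finite_trans[OF ext_metric] by blast
qed

lemma dist_finite_along:
  assumes "d z y0 < \<top>" "t > 0"
  shows "d z (y t) < \<top>"
  using ext_metric_finite_trans[OF ext_metric assms(1)] dist_start_finite[OF assms(2)]
    ext_metric_sym[OF ext_metric, of y0] by simp

lemma EVI_integrated: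
  assumes z: "E z < \<infinity>" "d z (y s) < \<top>" and s: "0 < s" "s \<le> t"
    and gap: "\<And>r. r \<in> {s..t} \<Longrightarrow> E z - E (y r) \<le> ereal c"
  shows "exp (K * t) * (enn2real (d (y t) z))\<^sup>2 - 2 * c * exp_primitive K t
       \<le> exp (K * s) * (enn2real (d (y s) z))\<^sup>2 - 2 * c * exp_primitive K s"
proof -
  define \<rho> where "\<rho> r = enn2real (d (y r) z)" for r
  define \<phi> where "\<phi> r = \<rho> r * \<rho> r" for r
  define h where "h r = exp (K * r) * \<phi> r - 2 * c * exp_primitive K r" for r
  have \<phi>: "\<phi> = (\<lambda>r. enn2real ((d (y r) z)\<^sup>2))"
    by (simp add: fun_eq_iff \<phi>_def \<rho>_def enn2real_mult power2_eq_square)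
  obtain N where N: "negligible N" and EVI: "\<And>r. r > 0 \<Longrightarrow> r \<notin> N \<Longrightarrow>
      \<exists>D. (\<phi> has_real_derivative D) (at r) \<and> ereal (D / 2 + K / 2 * \<phi> r) \<le> E z - E (y r)"
    unfolding \<phi> by (rule EVI_except_negligible[OF z(1) s(1) z(2)]) blast
  have "dominated_increments s t \<rho>"
    using z(2) s unfolding \<rho>_def by (intro loc_abs_cont_dist_dominated[OF ext_metric flow_loc_abs_cont])
  then have "dominated_increments s t h"
    unfolding h_def \<phi>_def
    by (intro dominated_increments_diff dominated_increments_mult dominated_increments_cmult
        dominated_increments_exp dominated_increments_exp_primitive)
  then have "h t \<le> h s"
  proof (rule dominated_increments_nonpos_derivative_imp_le[OF s(2) _ N])
    fix x assume x: "x \<in> {s..t} - N"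
    then have "x > 0" "x \<notin> N" using s by auto
    then obtain D where D: "(\<phi> has_real_derivative D) (at x)"
      and "ereal (D / 2 + K / 2 * \<phi> x) \<le> E z - E (y x)"
      using EVI by blast
    then have "ereal (D / 2 + K / 2 * \<phi> x) \<le> ereal c"
      using gap[of x] x by (blast intro: order_trans)
    then have "D + K * \<phi> x - 2 * c \<le> 0" by simp
    moreover have "(h has_real_derivative exp (K * x) * (D + K * \<phi> x - 2 * c)) (at x)"
      unfolding h_def by (auto intro!: derivative_eq_intros D exp_primitive_has_derivative simp: algebra_simps)
    ultimately show "\<exists>D. (h has_real_derivative D) (at x) \<and> D \<le> 0"
      by (meson exp_ge_zero mult_nonneg_nonpos)
  qed
  then show ?thesis unfolding h_def \<phi>_def \<rho>_def power2_eq_square .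
qed


lemma energy_lsc_along:
  assumes "t > 0" "sn \<longlonglongrightarrow> t"
  shows "E (y t) \<le> liminf (\<lambda>n. E (y (sn n)))"
  using lsc[unfolded ed_lsc_def, rule_format, OF loc_abs_cont_LIMSEQ[OF ext_metric flow_loc_abs_cont assms]] .

lemma stationary_if_energy_not_below:
  assumes s: "0 < s" "s \<le> b" and fin: "E (y s) < \<infinity>"
    and above: "\<And>r. r \<in> {s..b} \<Longrightarrow> E (y s) \<le> E (y r)"
  shows "y b = y s"
proof -
  have d0: "d (y s) (y s) = 0" using ext_metric_eq_0_iff[OF ext_metric] by simp
  have "E (y s) - E (y r) \<le> ereal 0" if "r \<in> {s..b}" for r
    using above[OF that] fin E_not_minf[of "y s"] by (cases "E (y s)"; cases "E (y r)") auto
  then have "exp (K * b) * (enn2real (d (y b) (y s)))\<^sup>2 - 2 * 0 * exp_primitive K b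
      \<le> exp (K * s) * (enn2real (d (y s) (y s)))\<^sup>2 - 2 * 0 * exp_primitive K s"
    using fin s d0 by (intro EVI_integrated) auto
  then have "enn2real (d (y b) (y s)) = 0" using d0 by (simp add: mult_le_0_iff)
  moreover have "d (y b) (y s) < \<top>"
    using s by (intro loc_abs_cont_dist_finite[OF ext_metric flow_loc_abs_cont]) auto
  ultimately show ?thesis
    using ext_metric_eq_0_iff[OF ext_metric] by (auto simp: enn2real_eq_0_iff)
qed

lemma energy_antimono:
  assumes a: "0 < a" "a \<le> b"
  shows "E (y b) \<le> E (y a)"
proof (rule ccontr)
  assume "\<not> ?thesis"
  then obtain c where c: "E (y a) < ereal c" "ereal c < E (y b)"
    by (meson ereal_dense2 not_le)
  \<comment> \<open>After the last time s at which the energy is at most c, it stays above E (y s); this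
    forces the flow to stop at s, contradicting E (y b) > c.\<close>
  define S where "S = {s \<in> {a..b}. E (y s) \<le> ereal c}"
  have "a \<in> S" using c a by (auto simp: S_def)
  have "bdd_above S" by (auto simp: S_def bdd_above_def)
  define s where "s = Sup S"
  have "s \<in> closure S" unfolding s_def using \<open>a \<in> S\<close> \<open>bdd_above S\<close> by (intro closure_contains_Sup) auto
  then obtain sn where sn: "\<And>n. sn n \<in> S" "sn \<longlonglongrightarrow> s"
    unfolding closure_sequential by blast
  have "closure S \<subseteq> {a..b}" by (rule closure_minimal) (auto simp: S_def)
  then have s_ab: "s \<in> {a..b}" using \<open>s \<in> closure S\<close> by blast
  have Es: "E (y s) \<le> ereal c"
  proof -
    have "E (y s) \<le> liminf (\<lambda>n. E (y (sn n)))" using s_ab a sn(2) by (intro energy_lsc_along) auto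
    also have "\<dots> \<le> ereal c"
      by (rule liminf_le_of_le) (use sn(1) in \<open>auto simp: S_def\<close>)
    finally show ?thesis .
  qed
  have "E (y s) \<le> E (y r)" if "r \<in> {s..b}" for r
  proof (cases "r = s")
    case False
    then have "r \<notin> S" using that cSup_upper[OF _ \<open>bdd_above S\<close>, of r] by (auto simp: s_def)
    then show ?thesis using that s_ab a Es by (auto simp: S_def)
  qed simp
  then have "y b = y s" using s_ab a Es by (intro stationary_if_energy_not_below) auto
  then show False using c Es by simp
qed

lemma dist_tendsto_start:
  assumes "d y0 z < \<top>"
  shows "((\<lambda>s. enn2real (d (y s) z)) \<longlongrightarrow> enn2real (d y0 z)) (at_right 0)"
proof -
  have "eventually (\<lambda>s. d (y s) y0 < 1) (at_right 0)"
    using flow_tendsto_start by (rule order_tendstoD) simp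
  then have "eventually (\<lambda>s. norm (enn2real (d (y s) z) - enn2real (d y0 z)) \<le> enn2real (d (y s) y0))
      (at_right 0)"
  proof (rule eventually_mono)
    fix s assume "d (y s) y0 < 1"
    then have "d (y s) y0 < \<top>" using ennreal_one_less_top less_trans by blast
    then show "norm (enn2real (d (y s) z) - enn2real (d y0 z)) \<le> enn2real (d (y s) y0)"
      using ext_metric_enn2real_reverse_triangle[OF ext_metric _ assms] by simp
  qed
  moreover have "((\<lambda>s. enn2real (d (y s) y0)) \<longlongrightarrow> 0) (at_right 0)"
    using tendsto_enn2real[of "\<lambda>s. d (y s) y0" 0] flow_tendsto_start by simp
  ultimately have "((\<lambda>s. enn2real (d (y s) z) - enn2real (d y0 z)) \<longlongrightarrow> 0) (at_right 0)"
    by (rule Lim_null_comparison)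
  then show ?thesis by (simp add: LIM_zero_iff)
qed

lemma EVI_pointwise_estimate:
  assumes t: "t > 0" and z: "E z = ereal ez" "d z y0 < \<top>" and Et: "E (y t) = ereal et"
  shows "exp (K * t) * (enn2real (d (y t) z))\<^sup>2 - 2 * (ez - et) * exp_primitive K t
       \<le> (enn2real (d y0 z))\<^sup>2"
proof -
  define H where "H s = exp (K * s) * (enn2real (d (y s) z))\<^sup>2 - 2 * (ez - et) * exp_primitive K s" for s
  have H_le: "H t \<le> H s" if s: "0 < s" "s \<le> t" for s
  proof -
    have "E z - E (y r) \<le> ereal (ez - et)" if r: "r \<in> {s..t}" for r
    proof -
      have "ereal et \<le> E (y r)" using energy_antimono[of r t] r s Et by simp
      then show ?thesis using z(1) by (cases "E (y r)") auto
    qed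
    moreover have "d z (y s) < \<top>" by (rule dist_finite_along[OF z(2) s(1)])
    ultimately show ?thesis unfolding H_def using z(1) s by (intro EVI_integrated) auto
  qed
  have "d y0 z < \<top>" using z(2) ext_metric_sym[OF ext_metric, of z y0] by simp
  then have "((\<lambda>s. enn2real (d (y s) z)) \<longlongrightarrow> enn2real (d y0 z)) (at_right 0)"
    by (rule dist_tendsto_start)
  moreover have "(exp_primitive K \<longlongrightarrow> exp_primitive K 0) (at_right 0)"
    using DERIV_isCont[OF exp_primitive_has_derivative, of 0 K] unfolding isCont_def
    by (rule tendsto_mono[OF at_within_le_at])
  ultimately have "(H \<longlongrightarrow> exp (K * 0) * (enn2real (d y0 z))\<^sup>2 - 2 * (ez - et) * exp_primitive K 0) (at_right 0)"
    unfolding H_def by (intro tendsto_diff tendsto_mult tendsto_power tendsto_const tendsto_exp) auto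
  then have "(H \<longlongrightarrow> (enn2real (d y0 z))\<^sup>2) (at_right 0)" by simp
  moreover have "eventually (\<lambda>s. H t \<le> H s) (at_right 0)"
    unfolding eventually_at_right_field using t by (intro exI[of _ t]) (auto intro: H_le)
  ultimately have "H t \<le> (enn2real (d y0 z))\<^sup>2"
    by (intro tendsto_le[OF _ _ tendsto_const]) simp_all
  then show ?thesis unfolding H_def .
qed

lemma energy_finite:
  assumes t: "t > 0" and z: "E z < \<infinity>" "d z y0 < \<top>"
  shows "E (y t) < \<infinity>"
proof (rule ccontr)
  assume "\<not> ?thesis"
  then have "E (y t) = \<infinity>" by (cases "E (y t)") auto
  then have inf: "E (y r) = \<infinity>" if "r \<in> {t/2..t}" for r
    using energy_antimono[of r t] that t by auto
  obtain N where "negligible N" and EVI: "\<And>r. r > 0 \<Longrightarrow> r \<notin> N \<Longrightarrow>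
      \<exists>D. ((\<lambda>s. enn2real ((d (y s) z)\<^sup>2)) has_real_derivative D) (at r) \<and>
        ereal (D / 2 + K / 2 * enn2real ((d (y r) z)\<^sup>2)) \<le> E z - E (y r)"
    using EVI_except_negligible[OF z(1) t dist_finite_along[OF z(2) t]] by blast
  have "{t/2..t} \<subseteq> N"
  proof
    fix r assume r: "r \<in> {t/2..t}"
    have "E z - E (y r) = -\<infinity>" using inf[OF r] z(1) E_not_minf[of z] by (cases "E z") auto
    then show "r \<in> N" using EVI[of r] r t by (cases "r \<in> N") auto
  qed
  then have "negligible {t/2..t}" using negligible_subset[OF \<open>negligible N\<close>] by blast
  then show False using negligible_interval(1)[of "t/2" t] t by (simp add: box_real)
qed

end

section \<open>Integration against the measure\<close>

lemma ennreal_less_imp_add_pos_less: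
  assumes "(a::ennreal) < p"
  obtains r where "r > 0" "a + ennreal r < p"
proof -
  obtain \<alpha> where a: "a = ennreal \<alpha>" "\<alpha> \<ge> 0" using assms by (cases a rule: ennreal_cases) auto
  show ?thesis
  proof (cases p rule: ennreal_cases)
    case (real \<pi>)
    then have "\<alpha> < \<pi>" using assms a by (simp add: ennreal_less_iff)
    then have "ennreal (\<alpha> + (\<pi> - \<alpha>) / 2) < ennreal \<pi>"
      using a(2) \<open>\<alpha> < \<pi>\<close> by (intro ennreal_lessI) (auto simp: field_simps)
    then have "a + ennreal ((\<pi> - \<alpha>) / 2) < p"
      using a real \<open>\<alpha> < \<pi>\<close> by (simp add: ennreal_plus[symmetric] del: ennreal_plus)
    then show ?thesis using \<open>\<alpha> < \<pi>\<close> by (intro that) auto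
  next
    case top
    then show ?thesis using a by (intro that[of 1]) (auto simp: ennreal_plus[symmetric] simp del: ennreal_plus)
  qed
qed

lemma ed_open_in_sets: "sets \<mu> = ed_borel d \<Longrightarrow> U \<in> ed_open d \<Longrightarrow> U \<in> sets \<mu>"
  unfolding ed_borel_def by (auto intro: sigma_sets.Basic)

lemma ext_metric_dist_measurable:
  assumes "ext_metric d" "sets \<mu> = ed_borel d" "space \<mu> = UNIV"
  shows "(\<lambda>z. d x z) \<in> borel_measurable \<mu>"
proof (rule borel_measurableI_less)
  fix p :: ennreal
  have "{z. d x z < p} \<in> ed_open d" unfolding ed_open_def
  proof safe
    fix z assume "d x z < p"
    then obtain r where "r > 0" and r: "d x z + ennreal r < p" by (rule ennreal_less_imp_add_pos_less)
    show "\<exists>r>0. \<forall>w. d z w < ennreal r \<longrightarrow> w \<in> {z. d x z < p}"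
    proof (intro exI[of _ r] conjI allI impI \<open>r > 0\<close>)
      fix w assume "d z w < ennreal r"
      have "d x w \<le> d x z + d z w" by (rule ext_metric_triangle[OF assms(1)])
      also have "\<dots> \<le> d x z + ennreal r" using \<open>d z w < ennreal r\<close> by (intro add_left_mono) simp
      finally show "w \<in> {z. d x z < p}" using r by simp
    qed
  qed
  then show "{z \<in> space \<mu>. d x z < p} \<in> sets \<mu>" using assms(3) ed_open_in_sets[OF assms(2)] by simp
qed

lemma ed_lsc_measurable:
  assumes "ext_metric d" "ed_lsc d E" "sets \<mu> = ed_borel d" "space \<mu> = UNIV"
  shows "E \<in> borel_measurable \<mu>"
proof (rule borel_measurableI_greater)
  fix p :: ereal
  have "{z. p < E z} \<in> ed_open d" unfolding ed_open_def
  proof (safe, rule ccontr)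
    fix z assume z: "p < E z" and no_ball: "\<not> (\<exists>r>0. \<forall>w. d z w < ennreal r \<longrightarrow> w \<in> {z. p < E z})"
    have "\<exists>w. d z w < ennreal (inverse (real (Suc n))) \<and> E w \<le> p" for n
    proof -
      have "inverse (real (Suc n)) > 0" by simp
      then have "\<not> (\<forall>w. d z w < ennreal (inverse (real (Suc n))) \<longrightarrow> w \<in> {z. p < E z})"
        using no_ball by blast
      then show ?thesis by (auto simp: not_less)
    qed
    then obtain w where w: "\<And>n. d z (w n) < ennreal (inverse (real (Suc n)))" "\<And>n. E (w n) \<le> p"
      by metis
    have lim: "(\<lambda>n. ennreal (inverse (real (Suc n)))) \<longlonglongrightarrow> 0"
      using tendsto_ennrealI[OF LIMSEQ_inverse_real_of_nat] by simp
    have "d (w n) z \<le> ennreal (inverse (real (Suc n)))" for n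
      using w(1)[of n] ext_metric_sym[OF assms(1), of z "w n"] by simp
    then have "(\<lambda>n. d (w n) z) \<longlonglongrightarrow> 0"
      by (intro tendsto_sandwich[OF _ _ tendsto_const lim] always_eventually) auto
    then have "E z \<le> liminf (\<lambda>n. E (w n))"
      using assms(2)[unfolded ed_lsc_def, rule_format, of w z] by simp
    also have "\<dots> \<le> p" by (rule liminf_le_of_le) (rule w(2))
    finally show False using z by simp
  qed
  then show "{z \<in> space \<mu>. p < E z} \<in> sets \<mu>" using assms(4) ed_open_in_sets[OF assms(3)] by simp
qed

lemma ereal_integral_eq_integral:
  assumes f: "integrable \<mu> f" and E: "AE z in \<mu>. E z = ereal (f z)"
  shows "ereal_integral \<mu> E = ereal (\<integral>z. f z \<partial>\<mu>)"
proof -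
  have P: "(\<integral>\<^sup>+ z. e2ennreal (E z) \<partial>\<mu>) = (\<integral>\<^sup>+ z. ennreal (f z) \<partial>\<mu>)"
    and Q: "(\<integral>\<^sup>+ z. e2ennreal (- E z) \<partial>\<mu>) = (\<integral>\<^sup>+ z. ennreal (- f z) \<partial>\<mu>)"
    using E by (auto intro!: nn_integral_cong_AE elim!: eventually_mono)
  have enn2ereal_finite: "enn2ereal x = ereal (enn2real x)" if "x < \<top>" for x
    using that by (metis enn2ereal_ennreal enn2real_nonneg ennreal_enn2real)
  have "(\<integral>\<^sup>+ z. ennreal (f z) \<partial>\<mu>) < \<top>" "(\<integral>\<^sup>+ z. ennreal (- f z) \<partial>\<mu>) < \<top>"
    using f by (auto simp: integrable_iff_bounded
        intro: le_less_trans[OF nn_integral_mono[OF ennreal_leI[OF abs_ge_self]]]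
               le_less_trans[OF nn_integral_mono[OF ennreal_leI[OF abs_ge_minus_self]]])
  then show ?thesis
    unfolding ereal_integral_def P Q real_lebesgue_integral_def[OF f]
    by (simp add: enn2ereal_finite)
qed

lemma ereal_integral_eq_top:
  "(\<integral>\<^sup>+ z. e2ennreal (E z) \<partial>\<mu>) = \<top> \<Longrightarrow> ereal_integral \<mu> E = \<infinity>"
  unfolding ereal_integral_def by (cases "\<integral>\<^sup>+ z. e2ennreal (- E z) \<partial>\<mu>") auto

lemma nn_integral_eq_integral_enn2real:
  assumes "AE z in M. g z < \<top>" "integrable M (\<lambda>z. enn2real (g z))"
  shows "(\<integral>\<^sup>+ z. g z \<partial>M) = ennreal (\<integral>z. enn2real (g z) \<partial>M)"
proof -
  have "(\<integral>\<^sup>+ z. g z \<partial>M) = (\<integral>\<^sup>+ z. ennreal (enn2real (g z)) \<partial>M)"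
    using assms(1) by (intro nn_integral_cong_AE) (auto elim!: eventually_mono)
  also have "\<dots> = ennreal (\<integral>z. enn2real (g z) \<partial>M)"
    using assms(2) by (intro nn_integral_eq_integral) auto
  finally show ?thesis .
qed

lemma integrable_enn2real:
  assumes "g \<in> borel_measurable M" "(\<integral>\<^sup>+ z. g z \<partial>M) < \<top>"
  shows "integrable M (\<lambda>z. enn2real (g z))"
proof (rule integrableI_nonneg)
  have "(\<integral>\<^sup>+ z. ennreal (enn2real (g z)) \<partial>M) \<le> (\<integral>\<^sup>+ z. g z \<partial>M)"
    by (intro nn_integral_mono) (simp add: ennreal_enn2real_if)
  then show "(\<integral>\<^sup>+ z. ennreal (enn2real (g z)) \<partial>M) < \<infinity>" using assms(2) by (simp add: le_less_trans)
qed (use assms(1) in auto)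

lemma integrable_max_0_of_nn_integral_finite:
  assumes "f \<in> borel_measurable M" "AE z in M. E z = ereal (f z)" "(\<integral>\<^sup>+ z. e2ennreal (E z) \<partial>M) < \<top>"
  shows "integrable M (\<lambda>z. max (f z) 0)"
proof (rule integrableI_nonneg)
  have "(\<integral>\<^sup>+ z. ennreal (max (f z) 0) \<partial>M) = (\<integral>\<^sup>+ z. e2ennreal (E z) \<partial>M)"
    using assms(2) by (intro nn_integral_cong_AE) (auto elim!: eventually_mono simp: max_def ennreal_neg)
  then show "(\<integral>\<^sup>+ z. ennreal (max (f z) 0) \<partial>M) < \<infinity>" using assms(3) by simp
qed (use assms(1) in auto)

lemma (in prob_space) integrate_lower_bound:
  fixes a b f :: "'a \<Rightarrow> real"
  assumes a: "integrable M a" and b: "b \<in> borel_measurable M" "\<And>z. 0 \<le> b z"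
    and f: "f \<in> borel_measurable M" "integrable M (\<lambda>z. max (f z) 0)"
    and \<alpha>: "\<alpha> > 0" and \<beta>: "\<beta> > 0"
    and bound: "AE z in M. \<alpha> * b z - \<beta> * (f z - c) \<le> a z"
  shows "integrable M f" "integrable M b"
    "\<alpha> * (\<integral>z. b z \<partial>M) - \<beta> * ((\<integral>z. f z \<partial>M) - c) \<le> (\<integral>z. a z \<partial>M)"
proof -
  show f_int: "integrable M f"
  proof (rule Bochner_Integration.integrable_bound[OF _ f(1)])
    show "integrable M (\<lambda>z. max (f z) 0 + \<bar>c\<bar> + \<bar>a z\<bar> / \<beta>)"
      using f(2) a by (intro Bochner_Integration.integrable_add integrable_divide_zero) auto
    show "AE z in M. norm (f z) \<le> norm (max (f z) 0 + \<bar>c\<bar> + \<bar>a z\<bar> / \<beta>)"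
      using bound
    proof eventually_elim
      case (elim z)
      have "0 \<le> \<alpha> * b z" using \<alpha> b(2)[of z] by simp
      moreover have "\<beta> * (c - f z) = - (\<beta> * (f z - c))" by (simp add: algebra_simps)
      ultimately have "\<beta> * (c - f z) \<le> \<bar>a z\<bar>" using elim by linarith
      then have "c - f z \<le> \<bar>a z\<bar> / \<beta>" using \<beta> by (simp add: pos_le_divide_eq mult.commute)
      moreover have "0 \<le> \<bar>a z\<bar> / \<beta>" using \<beta> by simp
      ultimately show ?case unfolding real_norm_def by (smt (verit))
    qed
  qed
  show b_int: "integrable M b"
  proof (rule Bochner_Integration.integrable_bound[OF _ b(1)])
    show "integrable M (\<lambda>z. (a z + \<beta> * (f z - c)) / \<alpha>)"
      using a f_int by (intro integrable_divide_zero Bochner_Integration.integrable_add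
          Bochner_Integration.integrable_mult_right Bochner_Integration.integrable_diff) auto
    show "AE z in M. norm (b z) \<le> norm ((a z + \<beta> * (f z - c)) / \<alpha>)"
      using bound
    proof eventually_elim
      case (elim z)
      then have "b z \<le> (a z + \<beta> * (f z - c)) / \<alpha>" using \<alpha> by (simp add: pos_le_divide_eq mult.commute)
      moreover have "(a z + \<beta> * (f z - c)) / \<alpha> \<le> \<bar>a z + \<beta> * (f z - c)\<bar> / \<alpha>"
        using \<alpha> by (simp add: divide_right_mono)
      ultimately have "b z \<le> \<bar>a z + \<beta> * (f z - c)\<bar> / \<alpha>" by linarith
      then show ?case using b(2)[of z] \<alpha> by simp
    qed
  qed
  have "integrable M (\<lambda>z. \<alpha> * b z - \<beta> * (f z - c))"
    using b_int f_int by (intro Bochner_Integration.integrable_diff Bochner_Integration.integrable_mult_right) auto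
  from integral_mono_AE[OF this a bound]
  show "\<alpha> * (\<integral>z. b z \<partial>M) - \<beta> * ((\<integral>z. f z \<partial>M) - c) \<le> (\<integral>z. a z \<partial>M)"
    using b_int f_int by (simp add: prob_space)
qed

lemma AE_finite_of_nn_integrals_finite:
  assumes "ext_metric d" "ed_lsc d E" "ed_prob d \<mu>"
    and "(\<integral>\<^sup>+ z. e2ennreal (E z) \<partial>\<mu>) < \<top>" "(\<integral>\<^sup>+ z. (d x z)\<^sup>2 \<partial>\<mu>) < \<top>"
  shows "AE z in \<mu>. E z < \<infinity> \<and> d x z < \<top>"
proof -
  have sets: "sets \<mu> = ed_borel d" and space: "space \<mu> = UNIV" using assms(3) by (simp_all add: ed_prob_def)
  note [measurable] = ext_metric_dist_measurable[OF assms(1) sets space] ed_lsc_measurable[OF assms(1,2) sets space]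
  have "(\<lambda>z. e2ennreal (E z)) \<in> borel_measurable \<mu>" "(\<lambda>z. (d x z)\<^sup>2) \<in> borel_measurable \<mu>"
    by measurable
  from this[THEN nn_integral_noteq_infinite]
  have "AE z in \<mu>. e2ennreal (E z) \<noteq> \<top>" "AE z in \<mu>. (d x z)\<^sup>2 \<noteq> \<top>"
    using assms(4,5) by (simp_all add: less_top)
  then show ?thesis
    by eventually_elim (auto simp: power2_eq_square ennreal_mult_eq_top_iff less_top)
qed

lemma (in EVI_gradient_flow) EVI_pointwise_estimate_AE:
  assumes fin: "AE z in \<mu>. E z < \<infinity> \<and> d y0 z < \<top>" and t: "t > 0" and et: "E (y t) = ereal et"
  shows "AE z in \<mu>. exp (K * t) * enn2real ((d (y t) z)\<^sup>2) - 2 * exp_primitive K t * (real_of_ereal (E z) - et)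
    \<le> enn2real ((d y0 z)\<^sup>2)"
  using fin
proof eventually_elim
  case (elim z)
  then obtain ez where ez: "E z = ereal ez" using E_not_minf[of z] by (cases "E z") auto
  moreover have "d z y0 < \<top>" using elim ext_metric_sym[OF ext_metric, of z y0] by simp
  ultimately have "exp (K * t) * (enn2real (d (y t) z))\<^sup>2 - 2 * (ez - et) * exp_primitive K t
      \<le> (enn2real (d y0 z))\<^sup>2"
    by (rule EVI_pointwise_estimate[OF t _ _ et])
  then show ?case using ez by (simp add: enn2real_power2 algebra_simps)
qed

lemma (in EVI_gradient_flow) integrated_EVI_estimate:
  assumes \<mu>: "ed_prob d \<mu>" and E_int: "(\<integral>\<^sup>+ z. e2ennreal (E z) \<partial>\<mu>) < \<top>"
    and start: "(\<integral>\<^sup>+ z. (d y0 z)\<^sup>2 \<partial>\<mu>) < \<top>" and t: "t > 0"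
  obtains F et where "ereal_integral \<mu> E = ereal F" "E (y t) = ereal et"
    "(\<integral>\<^sup>+ z. (d (y t) z)\<^sup>2 \<partial>\<mu>) < \<top>"
    "exp (K * t) * enn2real (\<integral>\<^sup>+ z. (d (y t) z)\<^sup>2 \<partial>\<mu>) - 2 * exp_primitive K t * (F - et)
       \<le> enn2real (\<integral>\<^sup>+ z. (d y0 z)\<^sup>2 \<partial>\<mu>)"
proof -
  interpret prob_space \<mu> using \<mu> by (simp add: ed_prob_def)
  have sets: "sets \<mu> = ed_borel d" and space: "space \<mu> = UNIV" using \<mu> by (simp_all add: ed_prob_def)
  note [measurable] = ext_metric_dist_measurable[OF ext_metric sets space] ed_lsc_measurable[OF ext_metric lsc sets space]
  have fin: "AE z in \<mu>. E z < \<infinity> \<and> d y0 z < \<top>"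
    by (rule AE_finite_of_nn_integrals_finite[OF ext_metric lsc \<mu> E_int start])
  then obtain z0 where "E z0 < \<infinity>" "d y0 z0 < \<top>"
    using eventually_happens[OF fin] ae_filter_bot by blast
  then have "E (y t) < \<infinity>"
    using ext_metric_sym[OF ext_metric, of y0 z0] by (intro energy_finite[OF t]) auto
  then obtain et where et: "E (y t) = ereal et" using E_not_minf[of "y t"] by (cases "E (y t)") auto
  define a where "a z = enn2real ((d y0 z)\<^sup>2)" for z
  define b where "b z = enn2real ((d (y t) z)\<^sup>2)" for z
  define f where "f z = real_of_ereal (E z)" for z
  have Ef: "AE z in \<mu>. E z = ereal (f z)"
    using fin by eventually_elim (use E_not_minf in \<open>auto simp: f_def ereal_real\<close>)
  have a_int: "integrable \<mu> a"
    unfolding a_def by (rule integrable_enn2real[OF _ start]) measurable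
  have f_meas: "f \<in> borel_measurable \<mu>" unfolding f_def by measurable
  have "integrable \<mu> (\<lambda>z. max (f z) 0)"
    using f_meas Ef E_int by (rule integrable_max_0_of_nn_integral_finite)
  moreover have "b \<in> borel_measurable \<mu>" unfolding b_def by measurable
  moreover have "2 * exp_primitive K t > 0" using exp_primitive_pos[OF t] by simp
  moreover have "0 \<le> b z" for z by (simp add: b_def)
  moreover note EVI_pointwise_estimate_AE[OF fin t et, folded a_def b_def f_def]
  ultimately have f_int: "integrable \<mu> f" and b_int: "integrable \<mu> b" and
    integrated: "exp (K * t) * (\<integral>z. b z \<partial>\<mu>) - 2 * exp_primitive K t * ((\<integral>z. f z \<partial>\<mu>) - et)
      \<le> (\<integral>z. a z \<partial>\<mu>)"
    using integrate_lower_bound[OF a_int _ _ f_meas _ exp_gt_zero] by blast+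
  have "AE z in \<mu>. (d y0 z)\<^sup>2 < \<top> \<and> (d (y t) z)\<^sup>2 < \<top>"
    using fin
  proof eventually_elim
    case (elim z)
    then have "d (y t) z < \<top>" by (intro ext_metric_finite_trans[OF ext_metric dist_start_finite[OF t]]) auto
    then show ?case using elim by (simp add: power2_eq_square ennreal_mult_less_top)
  qed
  then have "AE z in \<mu>. (d y0 z)\<^sup>2 < \<top>" "AE z in \<mu>. (d (y t) z)\<^sup>2 < \<top>"
    by (auto elim: eventually_mono)
  then have "(\<integral>\<^sup>+ z. (d y0 z)\<^sup>2 \<partial>\<mu>) = ennreal (\<integral>z. a z \<partial>\<mu>)"
    and "(\<integral>\<^sup>+ z. (d (y t) z)\<^sup>2 \<partial>\<mu>) = ennreal (\<integral>z. b z \<partial>\<mu>)"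
    using a_int b_int unfolding a_def b_def by (simp_all add: nn_integral_eq_integral_enn2real)
  moreover have "0 \<le> (\<integral>z. a z \<partial>\<mu>)" "0 \<le> (\<integral>z. b z \<partial>\<mu>)"
    by (simp_all add: a_def b_def)
  moreover have "ereal_integral \<mu> E = ereal (\<integral>z. f z \<partial>\<mu>)"
    by (rule ereal_integral_eq_integral[OF f_int Ef])
  ultimately show ?thesis using integrated by (intro that[OF _ et]) auto
qed

lemma EVI_flow_energy_bound:
  assumes em: "ext_metric d" and E_not_minf: "\<forall>x. E x \<noteq> -\<infinity>" and lsc: "ed_lsc d E"
    and \<mu>: "ed_prob d \<mu>" and Var: "Var d \<mu> < \<infinity>"
    and \<epsilon>: "\<epsilon> \<ge> 0" and start: "(\<integral>\<^sup>+ z. (d y z)\<^sup>2 \<partial>\<mu>) \<le> Var d \<mu> + ennreal \<epsilon>"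
    and flow: "EVI_flow d K E y yt" and t: "t > 0"
  shows "E (yt t) \<le> ereal_integral \<mu> E - ereal (K / 2 * enn2real (Var d \<mu>)) + ereal (\<epsilon> / (2 * I_K K t))"
proof (cases "(\<integral>\<^sup>+ z. e2ennreal (E z) \<partial>\<mu>) = \<top>")
  case True
  then show ?thesis by (simp add: ereal_integral_eq_top)
next
  case False
  interpret EVI_gradient_flow d K E y yt using assms by unfold_locales auto
  define V where "V = enn2real (Var d \<mu>)"
  define J where "J = exp_primitive K t"
  have "Var d \<mu> + ennreal \<epsilon> < \<top>" using Var by (simp add: less_top)
  with start have start_fin: "(\<integral>\<^sup>+ z. (d y z)\<^sup>2 \<partial>\<mu>) < \<top>" by (rule le_less_trans)
  obtain F et where F: "ereal_integral \<mu> E = ereal F" and et: "E (yt t) = ereal et"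
    and fin_t: "(\<integral>\<^sup>+ z. (d (yt t) z)\<^sup>2 \<partial>\<mu>) < \<top>"
    and estimate: "exp (K * t) * enn2real (\<integral>\<^sup>+ z. (d (yt t) z)\<^sup>2 \<partial>\<mu>) - 2 * J * (F - et)
       \<le> enn2real (\<integral>\<^sup>+ z. (d y z)\<^sup>2 \<partial>\<mu>)"
    using integrated_EVI_estimate[OF \<mu> _ start_fin t] False unfolding J_def by (auto simp: less_top)
  have "V \<le> enn2real (\<integral>\<^sup>+ z. (d (yt t) z)\<^sup>2 \<partial>\<mu>)"
    unfolding V_def Var_def using fin_t by (intro enn2real_mono INF_lower) auto
  then have "exp (K * t) * V - 2 * J * (F - et) \<le> enn2real (\<integral>\<^sup>+ z. (d y z)\<^sup>2 \<partial>\<mu>)"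
    using estimate by (smt (verit) exp_gt_zero mult_left_mono)
  also have "\<dots> \<le> V + \<epsilon>"
    using enn2real_mono[OF start] Var \<epsilon> by (simp add: V_def enn2real_plus less_top)
  finally have "(1 + K * J) * V - 2 * J * (F - et) \<le> V + \<epsilon>"
    by (simp add: J_def mult_exp_primitive)
  moreover have "J > 0" unfolding J_def by (rule exp_primitive_pos[OF t])
  ultimately have "et \<le> F - K / 2 * V + \<epsilon> / (2 * J)"
    by (simp add: field_simps)
  then show ?thesis using F et t by (simp add: V_def J_def I_K_eq_exp_primitive)
qed

lemma ed_lsc_le_of_flow_bound:
  fixes yt :: "real \<Rightarrow> 'a"
  assumes "ed_lsc d E" "((\<lambda>t. d (yt t) y) \<longlongrightarrow> 0) (at_right 0)" "\<And>t. t > 0 \<Longrightarrow> E (yt t) \<le> R"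
  shows "E y \<le> R"
proof -
  have "filterlim (\<lambda>n. inverse (real (Suc n))) (at_right 0) sequentially"
    using LIMSEQ_inverse_real_of_nat unfolding filterlim_at by auto
  then have "(\<lambda>n. d (yt (inverse (real (Suc n)))) y) \<longlonglongrightarrow> 0"
    by (rule filterlim_compose[OF assms(2)])
  then have "E y \<le> liminf (\<lambda>n. E (yt (inverse (real (Suc n)))))"
    using assms(1)[unfolded ed_lsc_def, rule_format] by simp
  also have "\<dots> \<le> R" by (rule liminf_le_of_le) (simp add: assms(3))
  finally show ?thesis .
qed

theorem theorem5p2:
  fixes d :: "'a \<Rightarrow> 'a \<Rightarrow> ennreal" and K :: real and E :: "'a \<Rightarrow> ereal"
    and \<mu> :: "'a measure"
  assumes "ext_metric d"
    and "\<forall>x. E x \<noteq> -\<infinity>"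
    and "ed_lsc d E"
    and "ed_prob d \<mu>"
    and "Var d \<mu> < \<infinity>"
  shows "(\<forall>(\<epsilon>::real) y yt. \<epsilon> \<ge> 0 \<longrightarrow>
            (\<integral>\<^sup>+ z. (d y z)\<^sup>2 \<partial>\<mu>) \<le> Var d \<mu> + ennreal \<epsilon> \<longrightarrow>
            EVI_flow d K E y yt \<longrightarrow>
            (\<forall>t>0. E (yt t) \<le> ereal_integral \<mu> E - ereal (K / 2 * enn2real (Var d \<mu>))
                                + ereal (\<epsilon> / (2 * I_K K t))))
       \<and> (\<forall>yb yt. barycenter d \<mu> yb \<longrightarrow> EVI_flow d K E yb yt \<longrightarrow>
            E yb \<le> ereal_integral \<mu> E
                    - ereal (K / 2 * enn2real (\<integral>\<^sup>+ z. (d yb z)\<^sup>2 \<partial>\<mu>)))"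
proof (intro conjI allI impI)
  fix \<epsilon> t :: real and y yt
  assume "\<epsilon> \<ge> 0" "(\<integral>\<^sup>+ z. (d y z)\<^sup>2 \<partial>\<mu>) \<le> Var d \<mu> + ennreal \<epsilon>" "EVI_flow d K E y yt" "t > 0"
  then show "E (yt t) \<le> ereal_integral \<mu> E - ereal (K / 2 * enn2real (Var d \<mu>)) + ereal (\<epsilon> / (2 * I_K K t))"
    by (intro EVI_flow_energy_bound[OF assms])
next
  fix yb yt
  assume "barycenter d \<mu> yb" and flow: "EVI_flow d K E yb yt"
  then have Var: "(\<integral>\<^sup>+ z. (d yb z)\<^sup>2 \<partial>\<mu>) = Var d \<mu>" by (simp add: barycenter_def)
  have "((\<lambda>t. d (yt t) yb) \<longlongrightarrow> 0) (at_right 0)" using flow by (simp add: EVI_flow_def)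
  moreover have "E (yt t) \<le> ereal_integral \<mu> E - ereal (K / 2 * enn2real (Var d \<mu>))" if "t > 0" for t
    using EVI_flow_energy_bound[OF assms _ _ flow that, of 0] Var by simp
  ultimately show "E yb \<le> ereal_integral \<mu> E - ereal (K / 2 * enn2real (\<integral>\<^sup>+ z. (d yb z)\<^sup>2 \<partial>\<mu>))"
    unfolding Var by (rule ed_lsc_le_of_flow_bound[OF assms(3)])
qed

end
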